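(* Let $k\ge2$, $n\ge1$ be integers, let $\bar{\mathcal{P}}\in\mathbb{R}^{[k,n]}$ be a columnwise-substochastic tensor, $\mathbf{v}\in\mathbb{R}^n$ a stochastic vector and $\alpha\in[0,1)$. Define $\mathcal{P}\in\mathbb{R}^{[k,n]}$ by $p_{ii_2\dots i_k}:=\bar p_{ii_2\dots i_k}+v_i\left(1-\sum_{\ell=1}^n\bar p_{\ell i_2\dots i_k}\right)$. Then the MPR problem $$\mathbf{x}=\alpha\mathcal{P}\mathbf{x}^{k-1}+(1-\alpha)\mathbf{v},\quad\mathbf{x}\in\mathbb{R}^n_+,\quad\mathbf{e}^T\mathbf{x}=1$$ has a unique solution if and only if the MLPPR system $(\mathbf{e}^T\mathbf{y})^{k-2}\mathbf{y}-\alpha\bar{\mathcal{P}}\mathbf{y}^{k-1}=\mathbf{v}$ has a unique nonnegative solution $\mathbf{y}\in\mathbb{R}^n_+$.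
   Context: For $\mathcal{P}\in\mathbb{R}^{[k,n]}$ (real tensors of order $k$, dimension $n$) and $\mathbf{y}\in\mathbb{R}^n$, $(\mathcal{P}\mathbf{y}^{k-1})_i=\sum_{i_2,\dots,i_k}p_{i i_2\dots i_k}y_{i_2}\cdots y_{i_k}$. $\bar{\mathcal{P}}$ is columnwise-substochastic if its entries are nonnegative and $\sum_{i}\bar p_{i i_2\dots i_k}\le1$ for all $i_2,\dots,i_k$. $\mathbf{e}$ is the all-ones vector; a stochastic vector is nonnegative with entries summing to $1$. *)

theory Defs
  imports Complex_Main
begin

text \<open>A tensor of order k and dimension n is a function P :: 'n \<Rightarrow> 'n list \<Rightarrow> real,
where P i is is the entry p_{i i_2 ... i_k} for a multi-index list is = [i_2,...,i_k]
of length k-1 (values at lists of other lengths are irrelevant).\<close>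

definition multi_idx :: "nat \<Rightarrow> 'n::finite list set" where
  "multi_idx m = {is. length is = m}"

text \<open>(P y^{k-1})_i = sum over i_2..i_k of p_{i i_2..i_k} y_{i_2} ... y_{i_k}\<close>
definition tensor_apply :: "nat \<Rightarrow> ('n::finite \<Rightarrow> 'n list \<Rightarrow> real) \<Rightarrow> ('n \<Rightarrow> real) \<Rightarrow> 'n \<Rightarrow> real" where
  "tensor_apply k P y i = (\<Sum>is\<in>multi_idx (k - 1). P i is * prod_list (map y is))"

definition columnwise_substochastic :: "nat \<Rightarrow> ('n::finite \<Rightarrow> 'n list \<Rightarrow> real) \<Rightarrow> bool" where
  "columnwise_substochastic k P \<longleftrightarrow>
     (\<forall>i. \<forall>is\<in>multi_idx (k - 1). 0 \<le> P i is) \<and>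
     (\<forall>is\<in>multi_idx (k - 1). (\<Sum>i\<in>UNIV. P i is) \<le> 1)"

definition stochastic_vec :: "('n::finite \<Rightarrow> real) \<Rightarrow> bool" where
  "stochastic_vec v \<longleftrightarrow> (\<forall>i. 0 \<le> v i) \<and> (\<Sum>i\<in>UNIV. v i) = 1"

end

theory Submission
  imports Defs
begin

text \<open>Summing the MLPPR system over i shows that a solution y has positive mass s = e^T y and
satisfies s^(k-1) - \<alpha> e^T Pbar y^(k-1) = 1. Since tensor_apply is homogeneous of degree k - 1,
the scaling y = t x with e^T x = 1 turns the MLPPR system into the MPR system for x together with
the normalisation t^(k-1) (1 - \<alpha> e^T Pbar x^(k-1)) = 1. Hence y \<mapsto> y / e^T y is a bijection
from the nonnegative MLPPR solutions onto the MPR solutions, with inverse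
x \<mapsto> (1 - \<alpha> e^T Pbar x^(k-1))^(-1/(k-1)) x, and uniqueness transfers.\<close>

lemma ex1_iff_ex1_by_inverses:
  assumes "\<And>y. Y y \<Longrightarrow> X (f y)" and "\<And>x. X x \<Longrightarrow> Y (g x)"
    and "\<And>x. X x \<Longrightarrow> f (g x) = x" and "\<And>y. Y y \<Longrightarrow> g (f y) = y"
  shows "(\<exists>!x. X x) \<longleftrightarrow> (\<exists>!y. Y y)"
  using assms by metis

lemma prod_list_map_scale:
  "prod_list (map (\<lambda>j. c * y j) is) = (c::'a::comm_monoid_mult) ^ length is * prod_list (map y is)"
  by (induction "is") (auto simp: mult_ac)

lemma tensor_apply_scale:
  "tensor_apply k Q (\<lambda>j. c * y j) i = c ^ (k - 1) * tensor_apply k Q y i"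
  unfolding tensor_apply_def sum_distrib_left
  by (rule sum.cong) (auto simp: multi_idx_def prod_list_map_scale mult_ac)

lemma multi_idx_Suc: "multi_idx (Suc m) = (\<lambda>(j, is). j # is) ` (UNIV \<times> multi_idx m)"
  unfolding multi_idx_def by (auto simp: length_Suc_conv image_iff)

lemma sum_prod_list_multi_idx:
  fixes x :: "'n::finite \<Rightarrow> real"
  shows "(\<Sum>is\<in>multi_idx m. prod_list (map x is)) = sum x UNIV ^ m"
proof (induction m)
  case 0
  have "multi_idx 0 = {[] :: 'n list}" unfolding multi_idx_def by auto
  then show ?case by simp
next
  case (Suc m)
  have inj: "inj_on (\<lambda>(j, is). j # is) (UNIV \<times> (multi_idx m :: 'n list set))"
    by (auto simp: inj_on_def)
  have "(\<Sum>is\<in>multi_idx (Suc m). prod_list (map x is))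
      = (\<Sum>j\<in>UNIV. \<Sum>is\<in>multi_idx m. x j * prod_list (map x is))"
    unfolding multi_idx_Suc sum.reindex[OF inj] sum.cartesian_product
    by (intro sum.cong) auto
  also have "\<dots> = (\<Sum>j\<in>UNIV. x j * sum x UNIV ^ m)"
    by (simp add: sum_distrib_left[symmetric] Suc.IH)
  finally show ?case by (simp add: sum_distrib_right)
qed

lemma sum_tensor_apply:
  "(\<Sum>l\<in>UNIV. tensor_apply k Q x l)
     = (\<Sum>is\<in>multi_idx (k - 1). (\<Sum>l\<in>UNIV. Q l is) * prod_list (map x is))"
  unfolding tensor_apply_def sum_distrib_right by (rule sum.swap)

lemma sum_tensor_apply_substochastic:
  fixes x :: "'n::finite \<Rightarrow> real"
  assumes Q: "columnwise_substochastic k Q" and x: "\<And>i. 0 \<le> x i"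
  shows "0 \<le> (\<Sum>l\<in>UNIV. tensor_apply k Q x l)"
    and "(\<Sum>l\<in>UNIV. tensor_apply k Q x l) \<le> sum x UNIV ^ (k - 1)"
proof -
  have prod_nonneg: "0 \<le> prod_list (map x is)" for "is"
    by (rule prod_list_nonneg) (use x in auto)
  show "0 \<le> (\<Sum>l\<in>UNIV. tensor_apply k Q x l)"
    unfolding sum_tensor_apply using Q prod_nonneg
    by (intro sum_nonneg mult_nonneg_nonneg)
      (auto simp: columnwise_substochastic_def intro!: sum_nonneg)
  have "(\<Sum>is\<in>multi_idx (k - 1). (\<Sum>l\<in>UNIV. Q l is) * prod_list (map x is))
      \<le> (\<Sum>is\<in>multi_idx (k - 1). prod_list (map x is))"
    using Q prod_nonneg
    by (intro sum_mono mult_left_le_one_le)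
      (auto simp: columnwise_substochastic_def intro!: sum_nonneg)
  then show "(\<Sum>l\<in>UNIV. tensor_apply k Q x l) \<le> sum x UNIV ^ (k - 1)"
    unfolding sum_tensor_apply sum_prod_list_multi_idx .
qed

definition stochastic_completion ::
    "('n::finite \<Rightarrow> 'n list \<Rightarrow> real) \<Rightarrow> ('n \<Rightarrow> real) \<Rightarrow> 'n \<Rightarrow> 'n list \<Rightarrow> real" where
  "stochastic_completion Q v = (\<lambda>i is. Q i is + v i * (1 - (\<Sum>l\<in>UNIV. Q l is)))"

lemma tensor_apply_stochastic_completion:
  "tensor_apply k (stochastic_completion Q v) x i
     = tensor_apply k Q x i + v i * (sum x UNIV ^ (k - 1) - (\<Sum>l\<in>UNIV. tensor_apply k Q x l))"
  unfolding sum_tensor_apply sum_prod_list_multi_idx[symmetric]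
  unfolding tensor_apply_def stochastic_completion_def
  by (simp add: algebra_simps sum.distrib sum_subtractf sum_distrib_left)

definition mpr_solution ::
    "nat \<Rightarrow> real \<Rightarrow> ('n::finite \<Rightarrow> 'n list \<Rightarrow> real) \<Rightarrow> ('n \<Rightarrow> real) \<Rightarrow> ('n \<Rightarrow> real) \<Rightarrow> bool" where
  "mpr_solution k \<alpha> P v x \<longleftrightarrow>
     (\<forall>i. x i = \<alpha> * tensor_apply k P x i + (1 - \<alpha>) * v i) \<and> (\<forall>i. 0 \<le> x i) \<and> sum x UNIV = 1"

definition mlppr_solution ::
    "nat \<Rightarrow> real \<Rightarrow> ('n::finite \<Rightarrow> 'n list \<Rightarrow> real) \<Rightarrow> ('n \<Rightarrow> real) \<Rightarrow> ('n \<Rightarrow> real) \<Rightarrow> bool" where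
  "mlppr_solution k \<alpha> Q v y \<longleftrightarrow>
     (\<forall>i. 0 \<le> y i) \<and> (\<forall>i. sum y UNIV ^ (k - 2) * y i - \<alpha> * tensor_apply k Q y i = v i)"

locale multilinear_pagerank =
  fixes k :: nat and Pbar :: "'n::finite \<Rightarrow> 'n list \<Rightarrow> real"
    and v :: "'n \<Rightarrow> real" and \<alpha> :: real
  assumes order: "k \<ge> 2"
    and substochastic: "columnwise_substochastic k Pbar"
    and stochastic: "stochastic_vec v"
    and damping: "0 \<le> \<alpha>" "\<alpha> < 1"
begin

abbreviation mass_defect :: "('n \<Rightarrow> real) \<Rightarrow> real" where
  "mass_defect x \<equiv> 1 - \<alpha> * (\<Sum>l\<in>UNIV. tensor_apply k Pbar x l)"

lemma power_order_minus_2_mult: "(s::real) ^ (k - 2) * s = s ^ (k - 1)"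
  using power_minus_mult[of "k - 1" s] order by (simp add: diff_diff_left numeral_2_eq_2)

lemma sum_v_eq_1: "sum v UNIV = 1"
  using stochastic by (simp add: stochastic_vec_def)

lemma mass_defect_pos:
  assumes "\<And>i. 0 \<le> x i" and "sum x UNIV = 1"
  shows "0 < mass_defect x"
proof -
  have "(\<Sum>l\<in>UNIV. tensor_apply k Pbar x l) \<le> 1"
    using sum_tensor_apply_substochastic(2)[OF substochastic, where x = x] assms by simp
  then have "\<alpha> * (\<Sum>l\<in>UNIV. tensor_apply k Pbar x l) \<le> \<alpha>"
    using damping(1) by (simp add: mult_left_le)
  then show ?thesis using damping(2) by simp
qed

lemma mlppr_mass_equation:
  assumes "mlppr_solution k \<alpha> Pbar v y"
  shows "sum y UNIV ^ (k - 1) - \<alpha> * (\<Sum>l\<in>UNIV. tensor_apply k Pbar y l) = 1"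
proof -
  have "(\<Sum>i\<in>UNIV. sum y UNIV ^ (k - 2) * y i - \<alpha> * tensor_apply k Pbar y i) = 1"
    using assms sum_v_eq_1 by (simp add: mlppr_solution_def)
  then show ?thesis
    by (simp add: sum_subtractf sum_distrib_left[symmetric] power_order_minus_2_mult)
qed

lemma mlppr_mass_pos:
  assumes y: "mlppr_solution k \<alpha> Pbar v y"
  shows "0 < sum y UNIV"
proof -
  have y_nonneg: "\<And>i. 0 \<le> y i" using y by (simp add: mlppr_solution_def)
  have "0 \<le> \<alpha> * (\<Sum>l\<in>UNIV. tensor_apply k Pbar y l)"
    using damping(1) sum_tensor_apply_substochastic(1)[OF substochastic, where x = y] y_nonneg
    by simp
  then have "sum y UNIV ^ (k - 1) \<noteq> 0" using mlppr_mass_equation[OF y] by linarith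
  moreover have "0 \<le> sum y UNIV" using y_nonneg by (simp add: sum_nonneg)
  ultimately show ?thesis using order by (simp add: less_le)
qed

lemma mpr_equation_normalised:
  assumes "sum x UNIV = 1"
  shows "\<alpha> * tensor_apply k (stochastic_completion Pbar v) x i + (1 - \<alpha>) * v i
     = \<alpha> * tensor_apply k Pbar x i + mass_defect x * v i"
  unfolding tensor_apply_stochastic_completion assms by (simp add: algebra_simps)

lemma mlppr_equation_scaled:
  assumes "sum x UNIV = 1"
  shows "sum (\<lambda>j. t * x j) UNIV ^ (k - 2) * (t * x i)
       - \<alpha> * tensor_apply k Pbar (\<lambda>j. t * x j) i
     = t ^ (k - 1) * (x i - \<alpha> * tensor_apply k Pbar x i)"
proof -
  have "sum (\<lambda>j. t * x j) UNIV = t" using assms by (simp add: sum_distrib_left[symmetric])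
  then show ?thesis
    unfolding tensor_apply_scale power_order_minus_2_mult[of t, symmetric] by (simp add: algebra_simps)
qed

lemma mlppr_scaled_iff:
  assumes x_nonneg: "\<And>i. 0 \<le> x i" and x_mass: "sum x UNIV = 1" and t: "0 < t"
  shows "mlppr_solution k \<alpha> Pbar v (\<lambda>j. t * x j)
     \<longleftrightarrow> mpr_solution k \<alpha> (stochastic_completion Pbar v) v x \<and> t ^ (k - 1) * mass_defect x = 1"
proof -
  define r where "r i = x i - \<alpha> * tensor_apply k Pbar x i" for i
  define c where "c = t ^ (k - 1)"
  have mlppr_iff: "mlppr_solution k \<alpha> Pbar v (\<lambda>j. t * x j) \<longleftrightarrow> (\<forall>i. c * r i = v i)"
    using x_nonneg t by (simp add: mlppr_solution_def mlppr_equation_scaled[OF x_mass] r_def c_def)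
  have mpr_iff: "mpr_solution k \<alpha> (stochastic_completion Pbar v) v x
      \<longleftrightarrow> (\<forall>i. r i = mass_defect x * v i)"
    unfolding mpr_solution_def mpr_equation_normalised[OF x_mass] r_def
    using x_nonneg x_mass by (simp add: diff_eq_eq add.commute)
  show ?thesis
    unfolding mlppr_iff mpr_iff c_def[symmetric]
  proof (intro iffI conjI allI; (elim conjE)?)
    assume eqs: "\<forall>i. c * r i = v i"
    have "mass_defect x = sum r UNIV"
      using x_mass by (simp add: r_def sum_subtractf sum_distrib_left[symmetric])
    then have "c * mass_defect x = sum v UNIV"
      using eqs by (simp add: sum_distrib_left)
    then show normalised: "c * mass_defect x = 1"
      using sum_v_eq_1 by simp
    fix i
    have "r i = (mass_defect x * c) * r i" using normalised by (simp add: mult.commute)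
    also have "\<dots> = mass_defect x * v i" using eqs by (simp add: mult.assoc)
    finally show "r i = mass_defect x * v i" .
  next
    fix i
    assume eqs: "\<forall>i. r i = mass_defect x * v i" and normalised: "c * mass_defect x = 1"
    show "c * r i = v i" using eqs normalised by (simp add: mult.assoc[symmetric])
  qed
qed

lemma mlppr_normalise:
  assumes y: "mlppr_solution k \<alpha> Pbar v y"
  defines "x \<equiv> \<lambda>i. y i / sum y UNIV"
  shows "mpr_solution k \<alpha> (stochastic_completion Pbar v) v x"
    and "root (k - 1) (1 / mass_defect x) = sum y UNIV"
proof -
  have s: "0 < sum y UNIV" using mlppr_mass_pos[OF y] .
  have x_nonneg: "\<And>i. 0 \<le> x i"
    using y s by (simp add: x_def mlppr_solution_def)
  have x_mass: "sum x UNIV = 1"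
    using s by (simp add: x_def sum_divide_distrib[symmetric])
  have "(\<lambda>j. sum y UNIV * x j) = y" using s by (auto simp: x_def)
  then have "mlppr_solution k \<alpha> Pbar v (\<lambda>j. sum y UNIV * x j)" using y by simp
  then have mpr: "mpr_solution k \<alpha> (stochastic_completion Pbar v) v x"
    and normalised: "sum y UNIV ^ (k - 1) * mass_defect x = 1"
    unfolding mlppr_scaled_iff[OF x_nonneg x_mass s] by auto
  show "mpr_solution k \<alpha> (stochastic_completion Pbar v) v x" using mpr .
  have "1 / mass_defect x = sum y UNIV ^ (k - 1)"
    using normalised by (metis divide_eq_eq mult_zero_right zero_neq_one)
  then show "root (k - 1) (1 / mass_defect x) = sum y UNIV"
    using s order by (simp add: real_root_power_cancel)
qed

lemma mlppr_rescale:
  assumes x: "mpr_solution k \<alpha> (stochastic_completion Pbar v) v x"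
  defines "t \<equiv> root (k - 1) (1 / mass_defect x)"
  shows "mlppr_solution k \<alpha> Pbar v (\<lambda>i. t * x i)"
    and "sum (\<lambda>i. t * x i) UNIV = t" and "0 < t"
proof -
  have x_nonneg: "\<And>i. 0 \<le> x i" and x_mass: "sum x UNIV = 1"
    using x unfolding mpr_solution_def by blast+
  have d: "0 < mass_defect x" using mass_defect_pos[OF x_nonneg x_mass] .
  have k1: "0 < k - 1" using order by simp
  show t: "0 < t" using d k1 by (simp add: t_def)
  have "t ^ (k - 1) = 1 / mass_defect x" using d k1 by (simp add: t_def real_root_pow_pos2)
  then show "mlppr_solution k \<alpha> Pbar v (\<lambda>i. t * x i)"
    using mlppr_scaled_iff[OF x_nonneg x_mass t] x d by simp
  show "sum (\<lambda>i. t * x i) UNIV = t" using x_mass by (simp add: sum_distrib_left[symmetric])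
qed

theorem ex1_mpr_iff_ex1_mlppr:
  "(\<exists>!x. mpr_solution k \<alpha> (stochastic_completion Pbar v) v x)
     \<longleftrightarrow> (\<exists>!y. mlppr_solution k \<alpha> Pbar v y)"
proof (rule ex1_iff_ex1_by_inverses[where f = "\<lambda>y i. y i / sum y UNIV"
      and g = "\<lambda>x i. root (k - 1) (1 / mass_defect x) * x i"])
  fix x
  assume x: "mpr_solution k \<alpha> (stochastic_completion Pbar v) v x"
  show "mlppr_solution k \<alpha> Pbar v (\<lambda>i. root (k - 1) (1 / mass_defect x) * x i)"
    using mlppr_rescale(1)[OF x] .
  show "(\<lambda>i. root (k - 1) (1 / mass_defect x) * x i
      / sum (\<lambda>i. root (k - 1) (1 / mass_defect x) * x i) UNIV) = x"
    unfolding mlppr_rescale(2)[OF x] using mlppr_rescale(3)[OF x] by auto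
next
  fix y
  assume y: "mlppr_solution k \<alpha> Pbar v y"
  show "mpr_solution k \<alpha> (stochastic_completion Pbar v) v (\<lambda>i. y i / sum y UNIV)"
    using mlppr_normalise(1)[OF y] .
  show "(\<lambda>i. root (k - 1) (1 / mass_defect (\<lambda>i. y i / sum y UNIV)) * (y i / sum y UNIV))
      = y"
    unfolding mlppr_normalise(2)[OF y] using mlppr_mass_pos[OF y] by auto
qed

end

theorem theorem3p15:
  fixes k :: nat and Pbar :: "'n::finite \<Rightarrow> 'n list \<Rightarrow> real"
    and v :: "'n \<Rightarrow> real" and \<alpha> :: real
  assumes "k \<ge> 2"
    and "columnwise_substochastic k Pbar"
    and "stochastic_vec v"
    and "0 \<le> \<alpha>" and "\<alpha> < 1"
  defines "P \<equiv> (\<lambda>i is. Pbar i is + v i * (1 - (\<Sum>l\<in>UNIV. Pbar l is)))"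
  shows "(\<exists>!x::'n \<Rightarrow> real.
            (\<forall>i. x i = \<alpha> * tensor_apply k P x i + (1 - \<alpha>) * v i) \<and>
            (\<forall>i. 0 \<le> x i) \<and> (\<Sum>i\<in>UNIV. x i) = 1)
     \<longleftrightarrow>
         (\<exists>!y::'n \<Rightarrow> real. (\<forall>i. 0 \<le> y i) \<and>
            (\<forall>i. (\<Sum>j\<in>UNIV. y j) ^ (k - 2) * y i - \<alpha> * tensor_apply k Pbar y i = v i))"
proof -
  interpret multilinear_pagerank k Pbar v \<alpha>
    using assms(1-5) by unfold_locales
  show ?thesis
    using ex1_mpr_iff_ex1_mlppr
    unfolding P_def stochastic_completion_def mpr_solution_def mlppr_solution_def .
qed

end
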